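(* Let $n\ge w\ge t\ge1$ and $q\ge1$ be integers, let $m=\binom{w}{t}$, and suppose $A=\{A_1,\dots,A_m\}$ is a partition of $Q_q^n(t)$ into $m$ sets each of which is an $A(n,q,w,t)$ design (all of them then have the same cardinality $N$). Let $GA$ be the $m$-partite hypergraph with parts $A_1,\dots,A_m$ in which a collection $\{b_1,\dots,b_m\}$ with $b_i\in A_i$ is an edge if and only if there exists $a\in Q_q^n(w)$ with $F(a)\subseteq F(b_i)$ for all $i$ (equivalently, $\{b_1,\dots,b_m\}$ is the set of all words of weight $t$ extended by $a$). Then the number of $H(n,q,w,t)$ designs equals $\operatorname{per}_m M(GA)$.
   Context: $Q_q=\{0,\dots,q-1\}$, $Q_{q*}=Q_q\cup\{*\}$. A word $u\in Q_{q*}^n$ has weight $n$ minus its number of $*$ symbols and corresponds to the face $F(u)=\{x\in Q_q^n: x_i=u_i\text{ whenever }u_i\ne *\}$ of the hypercube $Q_q^n$. $Q_q^n(t)$ denotes the set of words of weight $t$ (i.e. the $(n-t)$-faces). We say $u$ extends $v$ if $F(u)\subseteq F(v)$, i.e. $u_i=v_i$ whenever $v_i\ne*$. An $H(n,q,w,t)$ design is a set of words of weight $w$ such that every word of weight $t$ is extended by exactly one of them; an $A(n,q,w,t)$ design is a set of words of weight $t$ such that every word of weight $w$ extends exactly one of them. For an $m$-partite hypergraph with $N$ vertices in each part (each part enumerated $1,\dots,N$) whose edges contain one vertex from each part, the adjacency array $M=(a_{i_1\dots i_m})$ has $a_{i_1\dots i_m}=1$ iff vertices $i_1\in$ part 1,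 …, $i_m\in$ part $m$ form an edge, else $0$; a diagonal is an $N$-element subset of $\{1,\dots,N\}^m$ any two elements of which differ in every coordinate; and $\operatorname{per}_m M=\sum_{I}\prod_{(i_1,\dots,i_m)\in I}a_{i_1\dots i_m}$ over all diagonals $I$. *)

theory Defs
  imports "HOL-Library.FuncSet"
begin

type_synonym word = "nat \<Rightarrow> nat option"
  (* None plays the role of the symbol *; positions i >= n are None *)

definition words :: "nat \<Rightarrow> nat \<Rightarrow> word set" where
  "words n q = {u. (\<forall>i<n. \<forall>x. u i = Some x \<longrightarrow> x < q) \<and> (\<forall>i\<ge>n. u i = None)}"

definition weight :: "nat \<Rightarrow> word \<Rightarrow> nat" where
  "weight n u = card {i. i < n \<and> u i \<noteq> None}"

definition words_wt :: "nat \<Rightarrow> nat \<Rightarrow> nat \<Rightarrow> word set" where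
  "words_wt n q t = {u \<in> words n q. weight n u = t}"

definition extends :: "nat \<Rightarrow> word \<Rightarrow> word \<Rightarrow> bool" where
  "extends n u v \<longleftrightarrow> (\<forall>i<n. v i \<noteq> None \<longrightarrow> u i = v i)"

definition H_design :: "nat \<Rightarrow> nat \<Rightarrow> nat \<Rightarrow> nat \<Rightarrow> word set \<Rightarrow> bool" where
  "H_design n q w t D \<longleftrightarrow> D \<subseteq> words_wt n q w \<and>
     (\<forall>v\<in>words_wt n q t. \<exists>!u. u \<in> D \<and> extends n u v)"

definition A_design :: "nat \<Rightarrow> nat \<Rightarrow> nat \<Rightarrow> nat \<Rightarrow> word set \<Rightarrow> bool" where
  "A_design n q w t D \<longleftrightarrow> D \<subseteq> words_wt n q t \<and>
     (\<forall>u\<in>words_wt n q w. \<exists>!v. v \<in> D \<and> extends n u v)"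

(* diagonals of an m-dimensional array of order N: index tuples are functions
   {0..<m} \<rightarrow> {1..N} (extensional) *)
definition diagonals :: "nat \<Rightarrow> nat \<Rightarrow> (nat \<Rightarrow> nat) set set" where
  "diagonals m N = {I. I \<subseteq> ({..<m} \<rightarrow>\<^sub>E {1..N}) \<and> card I = N \<and>
      (\<forall>x\<in>I. \<forall>y\<in>I. x \<noteq> y \<longrightarrow> (\<forall>k<m. x k \<noteq> y k))}"

definition per :: "nat \<Rightarrow> nat \<Rightarrow> ((nat \<Rightarrow> nat) \<Rightarrow> nat) \<Rightarrow> nat" where
  "per m N a = (\<Sum>I\<in>diagonals m N. \<Prod>x\<in>I. a x)"

(* adjacency array of the hypergraph GA, parts A 0 .. A (m-1) enumerated by enum i : {1..N} -> A i *)
definition adj_GA :: "nat \<Rightarrow> nat \<Rightarrow> nat \<Rightarrow> nat \<Rightarrow> (nat \<Rightarrow> nat \<Rightarrow> word) \<Rightarrow> (nat \<Rightarrow> nat) \<Rightarrow> nat" where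
  "adj_GA n q w m enum x = (if \<exists>a\<in>words_wt n q w. \<forall>i<m. extends n a (enum i (x i)) then 1 else 0)"

end

(* A word a of weight w extends exactly one word of each part A i, its shadow in A i, so a
   determines an index tuple coords a, and these tuples are exactly the edges of GA. Since a
   word of weight w is determined by its subwords of weight t >= 1, coords is injective.
   A set D of words of weight w is an H design iff every shadow map is a bijection from D onto
   A i, i.e. iff coords ` D is a diagonal consisting of edges; the permanent of the 0/1 array
   counts exactly these diagonals. *)
theory Submission
  imports Defs
begin

lemma ex_subword_through:
  assumes a: "a \<in> words_wt n q w" and p: "p < n" "a p \<noteq> None" and t: "1 \<le> t" "t \<le> w"
  shows "\<exists>v\<in>words_wt n q t. extends n a v \<and> v p \<noteq> None"
proof -
  let ?S = "{i. i < n \<and> a i \<noteq> None}"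
  have "card ?S = w" using a by (simp add: words_wt_def weight_def)
  then have "t - 1 \<le> card (?S - {p})" using p t by (simp add: card_Diff_singleton)
  then obtain S' where S': "S' \<subseteq> ?S - {p}" "card S' = t - 1" "finite S'"
    by (rule obtain_subset_with_card_n)
  define v where "v i = (if i \<in> insert p S' then a i else None)" for i
  have supp: "{i. i < n \<and> v i \<noteq> None} = insert p S'" using S' p by (auto simp: v_def)
  have "p \<notin> S'" using S' by blast
  then have "card (insert p S') = t" using S' t by simp
  then have "v \<in> words_wt n q t"
    using a supp S' unfolding v_def words_wt_def words_def weight_def by auto
  moreover have "extends n a v" by (simp add: extends_def v_def)
  ultimately show ?thesis using p by (auto simp: v_def)
qed

lemma words_wt_eq_if_subwords_extended:
  assumes a: "a \<in> words_wt n q w" and a': "a' \<in> words_wt n q w" and t: "1 \<le> t" "t \<le> w"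
    and sub: "\<And>v. v \<in> words_wt n q t \<Longrightarrow> extends n a v \<Longrightarrow> extends n a' v"
  shows "a = a'"
proof -
  have agree: "a' i = a i" if i: "i < n" "a i \<noteq> None" for i
  proof -
    obtain v where v: "v \<in> words_wt n q t" "extends n a v" "v i \<noteq> None"
      using ex_subword_through[OF a i t] by blast
    show ?thesis using sub[OF v(1,2)] v i by (simp add: extends_def)
  qed
  let ?S = "{i. i < n \<and> a i \<noteq> None}" and ?S' = "{i. i < n \<and> a' i \<noteq> None}"
  have "?S \<subseteq> ?S'" using agree by force
  moreover have "card ?S = card ?S'" using a a' by (simp add: words_wt_def weight_def)
  ultimately have "?S = ?S'" by (intro card_subset_eq) auto
  then have "a i = a' i" if "i < n" for i
  proof -
    have "a i = None \<longleftrightarrow> a' i = None" using \<open>?S = ?S'\<close> that by blast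
    then show ?thesis using agree[of i] that by metis
  qed
  moreover have "a i = a' i" if "\<not> i < n" for i
    using a a' that by (simp add: words_wt_def words_def)
  ultimately show ?thesis by blast
qed

lemma diagonals_subset_Pow: "diagonals m N \<subseteq> Pow ({..<m} \<rightarrow>\<^sub>E {1..N})"
  by (auto simp: diagonals_def)

lemma finite_diagonals: "finite (diagonals m N)"
  by (rule finite_subset[OF diagonals_subset_Pow]) (simp add: finite_PiE)

lemma per_01_eq_card:
  assumes "\<And>x. a x \<le> 1"
  shows "per m N a = card {I \<in> diagonals m N. \<forall>x\<in>I. a x = 1}"
proof -
  have "(\<Prod>x\<in>I. a x) = (if \<forall>x\<in>I. a x = 1 then 1 else 0)" if "I \<in> diagonals m N" for I
  proof (cases "\<forall>x\<in>I. a x = 1")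
    case False
    then obtain x where x: "x \<in> I" "a x \<noteq> 1" by blast
    then have "a x = 0" using assms[of x] by linarith
    moreover have "I \<subseteq> {..<m} \<rightarrow>\<^sub>E {1..N}" using that diagonals_subset_Pow by blast
    then have "finite I" by (rule finite_subset) (simp add: finite_PiE)
    ultimately show ?thesis using False x(1) by (auto simp: prod_zero_iff)
  qed simp
  then have "per m N a = (\<Sum>I\<in>diagonals m N. if \<forall>x\<in>I. a x = 1 then 1 else 0)"
    unfolding per_def by (rule sum.cong[OF refl])
  also have "\<dots> = card {I \<in> diagonals m N. \<forall>x\<in>I. a x = 1}"
    using finite_diagonals by (simp add: sum.inter_filter[symmetric])
  finally show ?thesis .
qed

lemma diagonals_iff_bij_coordinates:
  assumes "0 < m" and "I \<subseteq> {..<m} \<rightarrow>\<^sub>E {1..N}"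
  shows "I \<in> diagonals m N \<longleftrightarrow> (\<forall>k<m. bij_betw (\<lambda>x. x k) I {1..N})"
proof
  assume I: "I \<in> diagonals m N"
  show "\<forall>k<m. bij_betw (\<lambda>x. x k) I {1..N}"
  proof (intro allI impI)
    fix k assume k: "k < m"
    have inj: "inj_on (\<lambda>x. x k) I"
      using I k unfolding diagonals_def inj_on_def by blast
    moreover have "(\<lambda>x. x k) ` I \<subseteq> {1..N}" using assms(2) k by (auto simp: PiE_iff)
    moreover have "card ((\<lambda>x. x k) ` I) = card {1..N}"
      using I by (simp add: card_image[OF inj] diagonals_def)
    ultimately show "bij_betw (\<lambda>x. x k) I {1..N}"
      by (simp add: bij_betw_def card_subset_eq)
  qed
next
  assume bij: "\<forall>k<m. bij_betw (\<lambda>x. x k) I {1..N}"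
  then have "card I = card {1..N}" using assms(1) by (blast intro: bij_betw_same_card)
  moreover have "x k \<noteq> y k" if "x \<in> I" "y \<in> I" "x \<noteq> y" "k < m" for x y k
    using bij that by (metis bij_betw_def inj_onD)
  ultimately show "I \<in> diagonals m N" using assms(2) by (auto simp: diagonals_def)
qed

lemma card_subsets_image_eq:
  assumes "inj_on f W"
  shows "card {D. D \<subseteq> W \<and> P (f ` D)} = card {I. I \<subseteq> f ` W \<and> P I}"
proof -
  have "inj_on (image f) {D. D \<subseteq> W \<and> P (f ` D)}"
    using inj_on_image_Pow[OF assms] by (rule inj_on_subset) auto
  moreover have "image f ` {D. D \<subseteq> W \<and> P (f ` D)} = {I. I \<subseteq> f ` W \<and> P I}"
    by (auto simp: subset_image_iff)
  ultimately show ?thesis by (metis card_image)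
qed

locale A_design_partition =
  fixes n q w t m N :: nat and A :: "nat \<Rightarrow> word set" and enum :: "nat \<Rightarrow> nat \<Rightarrow> word"
  assumes t_pos: "1 \<le> t" and t_le_w: "t \<le> w" and m_pos: "0 < m"
    and A_design: "i < m \<Longrightarrow> A_design n q w t (A i)"
    and words_wt_covered: "words_wt n q t \<subseteq> (\<Union>i<m. A i)"
    and enum_bij: "i < m \<Longrightarrow> bij_betw (enum i) {1..N} (A i)"
begin

definition shadow :: "nat \<Rightarrow> word \<Rightarrow> word" where
  "shadow i a = (THE v. v \<in> A i \<and> extends n a v)"

lemma ex1_extended_in_part:
  "i < m \<Longrightarrow> a \<in> words_wt n q w \<Longrightarrow> \<exists>!v. v \<in> A i \<and> extends n a v"
  using A_design by (simp add: A_design_def)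

lemma shadow_in_part:
  assumes "i < m" "a \<in> words_wt n q w"
  shows "shadow i a \<in> A i" and "extends n a (shadow i a)"
  using theI'[OF ex1_extended_in_part[OF assms]] by (simp_all add: shadow_def)

lemma shadow_eq_iff:
  assumes "i < m" "a \<in> words_wt n q w" "v \<in> A i"
  shows "shadow i a = v \<longleftrightarrow> extends n a v"
  using ex1_extended_in_part[OF assms(1,2)] shadow_in_part[OF assms(1,2)] assms(3) by blast

text \<open>The tuple \<open>coords a\<close> is the edge of GA formed by the subwords of weight \<open>t\<close> of \<open>a\<close>.\<close>
definition coords :: "word \<Rightarrow> nat \<Rightarrow> nat" where
  "coords a = (\<lambda>i\<in>{..<m}. inv_into {1..N} (enum i) (shadow i a))"

lemma enum_coords:
  assumes "i < m" "a \<in> words_wt n q w"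
  shows "enum i (coords a i) = shadow i a"
  using shadow_in_part(1)[OF assms] enum_bij[OF assms(1)]
  by (simp add: coords_def bij_betw_def f_inv_into_f assms(1))

lemma coords_PiE: "a \<in> words_wt n q w \<Longrightarrow> coords a \<in> {..<m} \<rightarrow>\<^sub>E {1..N}"
  using shadow_in_part(1) enum_bij
  by (auto simp: coords_def bij_betw_def intro!: inv_into_into simp del: One_nat_def)

lemma inj_on_coords: "inj_on coords (words_wt n q w)"
proof (rule inj_onI)
  fix a a' assume a: "a \<in> words_wt n q w" and a': "a' \<in> words_wt n q w" and eq: "coords a = coords a'"
  show "a = a'"
  proof (rule words_wt_eq_if_subwords_extended[OF a a' t_pos t_le_w])
    fix v assume v: "v \<in> words_wt n q t" "extends n a v"
    then obtain i where i: "i < m" "v \<in> A i" using words_wt_covered by blast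
    have "shadow i a' = shadow i a" using enum_coords[OF i(1) a] enum_coords[OF i(1) a'] eq by simp
    also have "\<dots> = v" using shadow_eq_iff[OF i(1) a i(2)] v(2) by simp
    finally show "extends n a' v" using shadow_in_part(2)[OF i(1) a'] by simp
  qed
qed

lemma adj_GA_eq:
  assumes x: "x \<in> {..<m} \<rightarrow>\<^sub>E {1..N}"
  shows "adj_GA n q w m enum x = (if x \<in> coords ` words_wt n q w then 1 else 0)"
proof -
  have "(\<exists>a\<in>words_wt n q w. \<forall>i<m. extends n a (enum i (x i))) \<longleftrightarrow> x \<in> coords ` words_wt n q w"
  proof
    assume "\<exists>a\<in>words_wt n q w. \<forall>i<m. extends n a (enum i (x i))"
    then obtain a where a: "a \<in> words_wt n q w" and ext: "\<forall>i<m. extends n a (enum i (x i))" by blast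
    have "coords a i = x i" if i: "i < m" for i
    proof -
      have xi: "x i \<in> {1..N}" using PiE_mem[OF x] i by blast
      then have "enum i (x i) \<in> A i" using bij_betwE[OF enum_bij[OF i]] by blast
      then have "shadow i a = enum i (x i)" using shadow_eq_iff[OF i a] ext i by blast
      then show ?thesis using xi enum_bij[OF i] i by (simp add: coords_def bij_betw_def inv_into_f_f)
    qed
    then have "coords a = x"
      using PiE_ext[OF coords_PiE[OF a] x] by blast
    then show "x \<in> coords ` words_wt n q w" using a by blast
  next
    assume "x \<in> coords ` words_wt n q w"
    then obtain a where "a \<in> words_wt n q w" "x = coords a" by blast
    then show "\<exists>a\<in>words_wt n q w. \<forall>i<m. extends n a (enum i (x i))"
      using enum_coords shadow_in_part(2) by metis
  qed
  then show ?thesis by (simp add: adj_GA_def)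
qed

lemma H_design_iff_bij_shadow:
  "H_design n q w t D \<longleftrightarrow> D \<subseteq> words_wt n q w \<and> (\<forall>i<m. bij_betw (shadow i) D (A i))"
proof
  assume H: "H_design n q w t D"
  then have D: "D \<subseteq> words_wt n q w" by (simp add: H_design_def)
  have bij: "bij_betw (shadow i) D (A i)" if i: "i < m" for i
  proof (rule bij_betw_imageI)
    have AT: "A i \<subseteq> words_wt n q t" using A_design[OF i] by (simp add: A_design_def)
    show "inj_on (shadow i) D"
    proof (rule inj_onI)
      fix a a' assume a: "a \<in> D" and a': "a' \<in> D" and eq: "shadow i a = shadow i a'"
      have "shadow i a \<in> words_wt n q t" using shadow_in_part(1)[OF i] a D AT by blast
      moreover have "extends n a (shadow i a)" "extends n a' (shadow i a)"
        using shadow_in_part(2)[OF i, of a] shadow_in_part(2)[OF i, of a'] a a' D eq by auto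
      ultimately show "a = a'" using H a a' by (auto simp: H_design_def)
    qed
    show "shadow i ` D = A i"
    proof
      show "shadow i ` D \<subseteq> A i" using shadow_in_part(1)[OF i] D by blast
      show "A i \<subseteq> shadow i ` D"
      proof
        fix v assume v: "v \<in> A i"
        then have "v \<in> words_wt n q t" using AT by blast
        then obtain a where "a \<in> D" "extends n a v" using H by (auto simp: H_design_def)
        then show "v \<in> shadow i ` D" using shadow_eq_iff[OF i _ v] D by blast
      qed
    qed
  qed
  show "D \<subseteq> words_wt n q w \<and> (\<forall>i<m. bij_betw (shadow i) D (A i))" using D bij by blast
next
  assume "D \<subseteq> words_wt n q w \<and> (\<forall>i<m. bij_betw (shadow i) D (A i))"
  then have D: "D \<subseteq> words_wt n q w" and bij: "\<And>i. i < m \<Longrightarrow> bij_betw (shadow i) D (A i)" by blast+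
  have "\<exists>!a. a \<in> D \<and> extends n a v" if v: "v \<in> words_wt n q t" for v
  proof -
    obtain i where i: "i < m" "v \<in> A i" using v words_wt_covered by blast
    have "a \<in> D \<and> extends n a v \<longleftrightarrow> a \<in> D \<and> shadow i a = v" for a
      using shadow_eq_iff[OF i(1) _ i(2)] D by blast
    moreover have "\<exists>!a. a \<in> D \<and> shadow i a = v"
    proof -
      have "v \<in> shadow i ` D" using bij_betw_imp_surj_on[OF bij[OF i(1)]] i(2) by simp
      then show ?thesis using bij_betw_imp_inj_on[OF bij[OF i(1)]] by (auto dest: inj_onD)
    qed
    ultimately show ?thesis by simp
  qed
  then show "H_design n q w t D" using D by (simp add: H_design_def)
qed

lemma bij_shadow_iff_bij_coordinate:
  assumes D: "D \<subseteq> words_wt n q w" and i: "i < m"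
  shows "bij_betw (shadow i) D (A i) \<longleftrightarrow> bij_betw (\<lambda>x. x i) (coords ` D) {1..N}"
proof -
  have "bij_betw (shadow i) D (A i) \<longleftrightarrow> bij_betw (inv_into {1..N} (enum i) \<circ> shadow i) D {1..N}"
    using shadow_in_part(1)[OF i] D
    by (intro bij_betw_comp_iff2 bij_betw_inv_into enum_bij[OF i]) auto
  also have "\<dots> \<longleftrightarrow> bij_betw ((\<lambda>x. x i) \<circ> coords) D {1..N}"
    using i by (intro bij_betw_cong) (simp add: coords_def)
  also have "\<dots> \<longleftrightarrow> bij_betw (\<lambda>x. x i) (coords ` D) {1..N}"
    using inj_on_subset[OF inj_on_coords D] by (intro bij_betw_comp_iff[symmetric] bij_betw_imageI) auto
  finally show ?thesis .
qed

lemma per_adj_GA_eq_card: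
  "per m N (adj_GA n q w m enum) = card {I \<in> diagonals m N. I \<subseteq> coords ` words_wt n q w}"
proof -
  let ?adj = "adj_GA n q w m enum"
  have "per m N ?adj = card {I \<in> diagonals m N. \<forall>x\<in>I. ?adj x = 1}"
    by (rule per_01_eq_card) (simp add: adj_GA_def)
  also have "{I \<in> diagonals m N. \<forall>x\<in>I. ?adj x = 1} = {I \<in> diagonals m N. I \<subseteq> coords ` words_wt n q w}"
  proof (rule Collect_cong, rule conj_cong[OF refl])
    fix I assume "I \<in> diagonals m N"
    then have "I \<subseteq> {..<m} \<rightarrow>\<^sub>E {1..N}" using diagonals_subset_Pow by blast
    then have "\<And>x. x \<in> I \<Longrightarrow> ?adj x = (if x \<in> coords ` words_wt n q w then 1 else 0)"
      using adj_GA_eq by blast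
    then show "(\<forall>x\<in>I. ?adj x = 1) \<longleftrightarrow> I \<subseteq> coords ` words_wt n q w"
      by auto
  qed
  finally show ?thesis .
qed

lemma card_H_designs:
  "card {D. H_design n q w t D} = card {I \<in> diagonals m N. I \<subseteq> coords ` words_wt n q w}"
proof -
  let ?C = "coords ` words_wt n q w" and ?P = "\<lambda>I. \<forall>i<m. bij_betw (\<lambda>x. x i) I {1..N}"
  have "{D. H_design n q w t D} = {D. D \<subseteq> words_wt n q w \<and> ?P (coords ` D)}"
    using H_design_iff_bij_shadow bij_shadow_iff_bij_coordinate by blast
  then have "card {D. H_design n q w t D} = card {I. I \<subseteq> ?C \<and> ?P I}"
    using card_subsets_image_eq[OF inj_on_coords] by simp
  also have "{I. I \<subseteq> ?C \<and> ?P I} = {I \<in> diagonals m N. I \<subseteq> ?C}"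
  proof (rule Collect_cong)
    fix I
    show "I \<subseteq> ?C \<and> ?P I \<longleftrightarrow> I \<in> diagonals m N \<and> I \<subseteq> ?C"
    proof (cases "I \<subseteq> ?C")
      case True
      then have "I \<subseteq> {..<m} \<rightarrow>\<^sub>E {1..N}" using coords_PiE by blast
      then show ?thesis using True diagonals_iff_bij_coordinates[OF m_pos] by simp
    qed simp
  qed
  finally show ?thesis .
qed

end

theorem proposition7:
  fixes n q w t m N :: nat
    and A :: "nat \<Rightarrow> word set"
    and enum :: "nat \<Rightarrow> nat \<Rightarrow> word"
  assumes "1 \<le> t" and "t \<le> w" and "w \<le> n" and "1 \<le> q"
    and "m = w choose t"
    and "\<forall>i<m. A_design n q w t (A i)"
    and "\<forall>i<m. \<forall>j<m. i \<noteq> j \<longrightarrow> A i \<inter> A j = {}"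
    and "(\<Union>i<m. A i) = words_wt n q t"
    and "\<forall>i<m. bij_betw (enum i) {1..N} (A i)"
  shows "card {D. H_design n q w t D} = per m N (adj_GA n q w m enum)"
proof -
  \<comment> \<open>\<open>m = w choose t\<close> is used only for \<open>m > 0\<close>.\<close>
  interpret A_design_partition n q w t m N A enum
    using assms(1,2,6,8,9) by unfold_locales (simp_all add: assms(5))
  show ?thesis
    using card_H_designs per_adj_GA_eq_card by simp
qed

end
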